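(* Let $n\ge2$ and let $g_{nk}(y)=\sum_{p=0}^\infty y^{k+pn}/(k+pn)!$ for $k=0,\dots,n-1$. Then for every real $y$, $$\sum_{k=0}^{n-1}g_{nk}^2(y)=\frac{1}{n}\sum_{l=0}^{n-1}\exp\!\Big[2y\cos\Big(\frac{2\pi l}{n}\Big)\Big].$$ *)

theory Defs
  imports "HOL-Analysis.Analysis"
begin

definition g :: "nat \<Rightarrow> nat \<Rightarrow> real \<Rightarrow> real" where
  "g n k y = (\<Sum>p. y ^ (k + p * n) / fact (k + p * n))"

end

theory Submission
  imports Defs
begin

text \<open>Let \<open>\<omega> = exp(2\<pi>i/n)\<close>. Averaging the exponential series over the rotations
  \<open>y \<mapsto> y \<omega>^l\<close>, weighted by \<open>\<omega>^(-lk)\<close>, keeps exactly the terms of degree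
  \<open>\<equiv> k (mod n)\<close> by orthogonality of the characters of \<open>\<int>/n\<close>; hence
  \<open>g\<^sub>n\<^sub>k(y) = (1/n) \<Sum>\<^sub>l exp(y \<omega>^l) \<omega>^(-lk)\<close>, i.e. \<open>k \<mapsto> g\<^sub>n\<^sub>k(y)\<close> is the discrete
  Fourier transform of \<open>l \<mapsto> exp(y \<omega>^l)\<close>. Parseval's identity for this transform gives
  \<open>\<Sum>\<^sub>k g\<^sub>n\<^sub>k(y)\<^sup>2 = (1/n) \<Sum>\<^sub>l |exp(y \<omega>^l)|\<^sup>2\<close>, and \<open>|exp(y \<omega>^l)|\<^sup>2 = exp(2y cos(2\<pi>l/n))\<close>.\<close>

definition root_unity :: "nat \<Rightarrow> complex" where
  "root_unity n = cis (2 * pi / n)"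

lemma root_unity_pow: "root_unity n ^ j = cis (2 * pi * j / n)"
  unfolding root_unity_def Complex.DeMoivre by (simp add: field_simps)

lemma norm_root_unity_pow [simp]: "norm (root_unity n ^ j) = 1"
  by (simp add: root_unity_pow)

lemma root_unity_pow_eq_iff:
  assumes "n > 0"
  shows "root_unity n ^ a = root_unity n ^ b \<longleftrightarrow> a mod n = b mod n"
proof -
  have "root_unity n ^ j = exp (2 * of_real pi * \<i> * of_nat j / of_nat n)" for j
    by (simp add: root_unity_pow cis_conv_exp mult_ac)
  then show ?thesis
    using complex_root_unity_eq[of n a b] assms by simp
qed

lemma sum_root_unity_orthogonality:
  assumes "n > 0"
  shows "(\<Sum>l<n. (root_unity n ^ a * cnj (root_unity n ^ b)) ^ l)
    = (if a mod n = b mod n then of_nat n else 0)"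
proof -
  define z where "z = root_unity n ^ a * cnj (root_unity n ^ b)"
  have cnj_eq_inverse: "cnj (root_unity n ^ j) = inverse (root_unity n ^ j)" for j
    by (simp add: root_unity_pow cis_cnj cis_inverse)
  have "z = 1 \<longleftrightarrow> a mod n = b mod n"
    unfolding z_def cnj_eq_inverse root_unity_pow_eq_iff[OF assms, symmetric]
    by (simp add: root_unity_pow field_simps)
  moreover have "z ^ n = 1"
  proof -
    have "(root_unity n ^ j) ^ n = 1" for j
      using root_unity_pow_eq_iff[OF assms, of "j * n" 0] by (simp flip: power_mult)
    then show ?thesis
      by (simp add: z_def power_mult_distrib flip: complex_cnj_power)
  qed
  ultimately show ?thesis
    by (auto simp: geometric_sum z_def)
qed

lemma sums_root_unity_filter:
  fixes a :: "nat \<Rightarrow> complex" and z :: complex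
  assumes n: "n > 0" and k: "k < n"
    and F: "\<And>u. norm u = norm z \<Longrightarrow> (\<lambda>m. a m * u ^ m) sums F u"
  shows "(\<lambda>p. a (k + p * n) * z ^ (k + p * n)) sums
    (1 / of_nat n * (\<Sum>l<n. F (z * root_unity n ^ l) * cnj (root_unity n ^ l) ^ k))"
    (is "_ sums ?S")
proof -
  define w where "w = root_unity n"
  define c where "c m = (if m mod n = k then a m * z ^ m else 0)" for m
  have summands: "(\<Sum>l<n. a m * (z * w ^ l) ^ m * cnj (w ^ l) ^ k) = of_nat n * c m" for m
  proof -
    have "(w ^ l) ^ m * cnj (w ^ l) ^ k = (w ^ m * cnj (w ^ k)) ^ l" for l
      by (simp add: power_mult_distrib mult.commute flip: power_mult complex_cnj_power)
    then have "(\<Sum>l<n. a m * (z * w ^ l) ^ m * cnj (w ^ l) ^ k)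
        = a m * z ^ m * (\<Sum>l<n. (w ^ m * cnj (w ^ k)) ^ l)"
      by (simp add: sum_distrib_left power_mult_distrib mult_ac)
    then show ?thesis
      using sum_root_unity_orthogonality[OF n, of m k] k by (simp add: w_def c_def)
  qed
  have "(\<lambda>m. \<Sum>l<n. a m * (z * w ^ l) ^ m * cnj (w ^ l) ^ k) sums
      (\<Sum>l<n. F (z * w ^ l) * cnj (w ^ l) ^ k)"
    by (intro sums_sum sums_mult2 F) (simp add: w_def norm_mult)
  then have "(\<lambda>m. of_nat n * c m) sums (\<Sum>l<n. F (z * w ^ l) * cnj (w ^ l) ^ k)"
    by (simp only: summands)
  from sums_mult[OF this, of "1 / of_nat n"] have "c sums ?S"
    using n by (simp add: w_def)
  moreover have "(\<lambda>p. c (k + p * n)) sums ?S \<longleftrightarrow> c sums ?S"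
  proof (rule sums_mono_reindex)
    show "strict_mono (\<lambda>p. k + p * n)"
      using n by (intro strict_monoI) simp
    show "c m = 0" if "m \<notin> range (\<lambda>p. k + p * n)" for m
    proof -
      have "m \<noteq> k + m div n * n"
        using that by blast
      then show ?thesis
        using mod_div_mult_eq[of m n] by (auto simp: c_def)
    qed
  qed
  ultimately have "(\<lambda>p. c (k + p * n)) sums ?S"
    by blast
  then show ?thesis
    using k by (simp add: c_def)
qed

lemma g_eq_root_unity_filter:
  assumes "n > 0" "k < n"
  shows "complex_of_real (g n k y) =
    1 / of_nat n * (\<Sum>l<n. exp (of_real y * root_unity n ^ l) * cnj (root_unity n ^ l) ^ k)"
    (is "_ = ?S")
proof -
  define f where "f p = y ^ (k + p * n) / fact (k + p * n)" for p
  have "(\<lambda>m. of_real (inverse (fact m)) * u ^ m) sums exp u" for u :: complex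
    using exp_converges[of u] by (simp add: scaleR_conv_of_real)
  from sums_root_unity_filter[OF assms this]
  have "(\<lambda>p. complex_of_real (f p)) sums ?S"
    by (simp add: f_def divide_inverse mult.commute)
  then have "summable f" and "(\<Sum>p. complex_of_real (f p)) = ?S"
    by (auto simp: sums_iff summable_of_real_iff)
  then show ?thesis
    unfolding g_def f_def[symmetric] by (simp add: suminf_of_real)
qed

lemma root_unity_transform_parseval:
  fixes E :: "nat \<Rightarrow> complex"
  assumes n: "n > 0"
  shows "(\<Sum>k<n. (cmod (1 / of_nat n * (\<Sum>l<n. E l * cnj (root_unity n ^ l) ^ k)))\<^sup>2)
    = 1 / real n * (\<Sum>l<n. (cmod (E l))\<^sup>2)"
proof -
  define w where "w = root_unity n"
  define G where "G k = (\<Sum>l<n. E l * cnj (w ^ l) ^ k)" for k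
  have orth: "(\<Sum>k<n. (w ^ l' * cnj w ^ l) ^ k) = (if l' = l then of_nat n else 0)"
    if "l < n" "l' < n" for l l'
    using sum_root_unity_orthogonality[OF n, of l' l] that by (simp add: w_def)
  have "complex_of_real (\<Sum>k<n. (cmod (G k))\<^sup>2) = (\<Sum>k<n. G k * cnj (G k))"
    by (simp only: of_real_sum complex_norm_square)
  also have "\<dots> = (\<Sum>k<n. \<Sum>l<n. \<Sum>l'<n. E l * cnj (E l') * (w ^ l' * cnj w ^ l) ^ k)"
    by (simp add: G_def sum_product cnj_sum power_mult_distrib mult_ac)
  also have "\<dots> = (\<Sum>l<n. \<Sum>l'<n. E l * cnj (E l') * (\<Sum>k<n. (w ^ l' * cnj w ^ l) ^ k))"
    unfolding sum_distrib_left by (rule trans[OF sum.swap], rule sum.cong[OF refl sum.swap])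
  also have "\<dots> = (\<Sum>l<n. of_nat n * (E l * cnj (E l)))"
  proof (rule sum.cong[OF refl])
    fix l assume "l \<in> {..<n}"
    then have "(\<Sum>l'<n. E l * cnj (E l') * (\<Sum>k<n. (w ^ l' * cnj w ^ l) ^ k))
        = (\<Sum>l'<n. if l' = l then of_nat n * (E l * cnj (E l')) else 0)"
      by (intro sum.cong) (auto simp: orth)
    with \<open>l \<in> {..<n}\<close> show "(\<Sum>l'<n. E l * cnj (E l') * (\<Sum>k<n. (w ^ l' * cnj w ^ l) ^ k))
        = of_nat n * (E l * cnj (E l))"
      by simp
  qed
  also have "\<dots> = complex_of_real (real n * (\<Sum>l<n. (cmod (E l))\<^sup>2))"
    by (simp only: of_real_mult of_real_sum of_real_of_nat_eq complex_norm_square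
        sum_distrib_left)
  finally have sum_norm_G: "(\<Sum>k<n. (cmod (G k))\<^sup>2) = real n * (\<Sum>l<n. (cmod (E l))\<^sup>2)"
    by (simp only: of_real_eq_iff)
  have "(\<Sum>k<n. (cmod (1 / of_nat n * G k))\<^sup>2) = (1 / real n)\<^sup>2 * (\<Sum>k<n. (cmod (G k))\<^sup>2)"
    by (simp add: norm_divide power_divide sum_distrib_left)
  also have "\<dots> = 1 / real n * (\<Sum>l<n. (cmod (E l))\<^sup>2)"
    using n by (simp only: sum_norm_G) (simp add: power2_eq_square)
  finally show ?thesis
    by (simp only: G_def w_def)
qed

lemma norm_exp_root_unity_square:
  "(cmod (exp (of_real y * root_unity n ^ l)))\<^sup>2 = exp (2 * y * cos (2 * pi * real l / real n))"
  by (simp add: root_unity_pow power2_eq_square flip: exp_add)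

theorem mainTheorem4:
  fixes n :: nat and y :: real
  assumes "n \<ge> 2"
  shows "(\<Sum>k<n. (g n k y)\<^sup>2) = (1 / real n) * (\<Sum>l<n. exp (2 * y * cos (2 * pi * real l / real n)))"
proof -
  have n: "n > 0"
    using assms by simp
  have "(\<Sum>k<n. (g n k y)\<^sup>2) = (\<Sum>k<n. (cmod (complex_of_real (g n k y)))\<^sup>2)"
    by simp
  also have "\<dots> = (\<Sum>k<n. (cmod (1 / of_nat n *
      (\<Sum>l<n. exp (of_real y * root_unity n ^ l) * cnj (root_unity n ^ l) ^ k)))\<^sup>2)"
    by (rule sum.cong[OF refl]) (simp only: lessThan_iff g_eq_root_unity_filter[OF n])
  also have "\<dots> = 1 / real n * (\<Sum>l<n. (cmod (exp (of_real y * root_unity n ^ l)))\<^sup>2)"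
    by (rule root_unity_transform_parseval[OF n])
  also have "\<dots> = 1 / real n * (\<Sum>l<n. exp (2 * y * cos (2 * pi * real l / real n)))"
    by (simp only: norm_exp_root_unity_square)
  finally show ?thesis .
qed

end
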